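(* Let $(\mathcal{Z},d_\mathcal{Z})$ be a metric space and $\mathcal{F}$ a class of functions $f:\mathcal{Z}\to\mathbb{R}$. The following are equivalent: (i) for every $f\in\mathcal{F}$ and every $z\in\mathcal{Z}$ there exists a constant $\lambda$ such that $f(z')-f(z)\le\lambda\, d_\mathcal{Z}(z,z')$ for all $z'\in\mathcal{Z}$; (ii) for every $f\in\mathcal{F}$ and every empirical distribution $P_n$ on $\mathcal{Z}$, the set $\{\lambda:\psi_{f,P_n}(\lambda)=0\}$ is nonempty, where $\psi_{f,P_n}(\lambda):=\mathbb{E}_{z\sim P_n}\big(\sup_{z'\in\mathcal{Z}}\{f(z')-\lambda d_\mathcal{Z}(z,z')-f(z)\}\big)$.
   Context: An empirical distribution $P_n$ is the uniform distribution on finitely many points $z_1,\dots,z_n\in\mathcal{Z}$. *)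

theory Defs
  imports "HOL-Analysis.Analysis"
begin

text \<open>An empirical distribution P_n is represented by the nonempty list of its
  (not necessarily distinct) atoms z_1, ..., z_n; expectation under P_n is the
  average over the list. The supremum may be +infinity, so values live in ereal.\<close>

definition empirical_expectation :: "'z list \<Rightarrow> ('z \<Rightarrow> ereal) \<Rightarrow> ereal" where
  "empirical_expectation zs g = (\<Sum>z\<leftarrow>zs. g z) / ereal (real (length zs))"

definition psi :: "('z::metric_space \<Rightarrow> real) \<Rightarrow> 'z list \<Rightarrow> real \<Rightarrow> ereal" where
  "psi f zs lam = empirical_expectation zs
      (\<lambda>z. SUP z'\<in>UNIV. ereal (f z' - lam * dist z z' - f z))"

end

theory Submission
  imports Defs
begin

text \<open>The integrand of \<open>psi f zs lam\<close> at an atom \<open>z\<close> is a supremum that is at least its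
  value \<open>0\<close> at \<open>z' = z\<close>, and it vanishes exactly when \<open>lam\<close> is an upper Lipschitz slope of
  \<open>f\<close> at \<open>z\<close>. An average of nonnegative terms vanishes iff every term does, so
  \<open>psi f zs lam = 0\<close> says that \<open>lam\<close> is a slope at every atom. Taking a single atom gives
  (ii) \<open>\<Longrightarrow>\<close> (i); conversely the largest of the slopes at the finitely many atoms works
  for all of them, since a slope can always be increased.\<close>

lemma SUP_ereal_eq_0_iff_attained:
  fixes g :: "'a \<Rightarrow> real"
  assumes "g a = 0"
  shows "(SUP x. ereal (g x)) = 0 \<longleftrightarrow> (\<forall>x. g x \<le> 0)"
proof -
  have "0 \<le> (SUP x. ereal (g x))"
    using SUP_upper[of a UNIV "\<lambda>x. ereal (g x)"] assms by (simp add: zero_ereal_def)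
  then show ?thesis
    by (simp add: order.eq_iff SUP_le_iff zero_ereal_def)
qed

text \<open>No nonemptiness is needed: for \<open>zs = []\<close> the average is \<open>0 / 0 = 0\<close> in \<open>ereal\<close>.\<close>

lemma empirical_expectation_eq_0_iff:
  assumes "\<And>z. z \<in> set zs \<Longrightarrow> 0 \<le> g z"
  shows "empirical_expectation zs g = 0 \<longleftrightarrow> (\<forall>z\<in>set zs. g z = 0)"
proof -
  have "(\<Sum>z\<leftarrow>zs. g z) = 0 \<longleftrightarrow> (\<forall>z\<in>set zs. g z = 0)"
    using assms by (subst sum_list_nonneg_eq_0_iff) auto
  then show ?thesis
    by (simp add: empirical_expectation_def ereal_divide_eq_0_iff)
qed

lemma psi_eq_0_iff:
  fixes f :: "'z::metric_space \<Rightarrow> real"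
  shows "psi f zs lam = 0 \<longleftrightarrow> (\<forall>z\<in>set zs. \<forall>z'. f z' - f z \<le> lam * dist z z')"
proof -
  have excess_eq_0_iff: "(SUP z'. ereal (f z' - lam * dist z z' - f z)) = 0
      \<longleftrightarrow> (\<forall>z'. f z' - f z \<le> lam * dist z z')" for z
    using SUP_ereal_eq_0_iff_attained[of "\<lambda>z'. f z' - lam * dist z z' - f z" z]
    by (simp add: algebra_simps)
  have excess_nonneg: "0 \<le> (SUP z'. ereal (f z' - lam * dist z z' - f z))" for z
    by (rule order.trans[OF _ SUP_upper[of z]]) (auto simp: zero_ereal_def)
  show ?thesis
    unfolding psi_def
    by (simp add: empirical_expectation_eq_0_iff excess_nonneg excess_eq_0_iff)
qed

lemma finite_common_upper_slope:
  fixes f :: "'z::metric_space \<Rightarrow> real"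
  assumes "finite A" and "\<forall>z\<in>A. \<exists>lam. \<forall>z'. f z' - f z \<le> lam * dist z z'"
  shows "\<exists>lam. \<forall>z\<in>A. \<forall>z'. f z' - f z \<le> lam * dist z z'"
proof -
  obtain L where L: "\<And>z z'. z \<in> A \<Longrightarrow> f z' - f z \<le> L z * dist z z'"
    using assms(2) by metis
  define lam where "lam = Max (insert 0 (L ` A))"
  have "f z' - f z \<le> lam * dist z z'" if "z \<in> A" for z z'
  proof -
    have "L z \<le> lam"
      unfolding lam_def using assms(1) that by simp
    then have "L z * dist z z' \<le> lam * dist z z'"
      by (simp add: mult_right_mono)
    then show ?thesis
      using L[OF that, of z'] by linarith
  qed
  then show ?thesis by blast
qed

theorem lemma3:
  fixes F :: "('z::metric_space \<Rightarrow> real) set"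
  shows "(\<forall>f\<in>F. \<forall>z. \<exists>lam::real. \<forall>z'. f z' - f z \<le> lam * dist z z')
     \<longleftrightarrow> (\<forall>f\<in>F. \<forall>zs::'z list. zs \<noteq> [] \<longrightarrow> {lam::real. psi f zs lam = 0} \<noteq> {})"
proof
  assume slopes: "\<forall>f\<in>F. \<forall>z. \<exists>lam::real. \<forall>z'. f z' - f z \<le> lam * dist z z'"
  show "\<forall>f\<in>F. \<forall>zs::'z list. zs \<noteq> [] \<longrightarrow> {lam::real. psi f zs lam = 0} \<noteq> {}"
  proof (intro ballI allI impI)
    fix f and zs :: "'z list"
    assume "f \<in> F"
    then obtain lam where "\<forall>z\<in>set zs. \<forall>z'. f z' - f z \<le> lam * dist z z'"
      using finite_common_upper_slope[of "set zs" f] slopes by blast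
    then show "{lam. psi f zs lam = 0} \<noteq> {}"
      by (auto simp: psi_eq_0_iff)
  qed
next
  assume zeros: "\<forall>f\<in>F. \<forall>zs::'z list. zs \<noteq> [] \<longrightarrow> {lam::real. psi f zs lam = 0} \<noteq> {}"
  show "\<forall>f\<in>F. \<forall>z. \<exists>lam::real. \<forall>z'. f z' - f z \<le> lam * dist z z'"
  proof (intro ballI allI)
    fix f z
    assume "f \<in> F"
    then obtain lam where "psi f [z] lam = 0"
      using zeros by blast
    then show "\<exists>lam. \<forall>z'. f z' - f z \<le> lam * dist z z'"
      by (auto simp: psi_eq_0_iff)
  qed
qed

end
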